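(* Let $\{\xi_{pq}:\mathbf A_p\Rightarrow\mathbf A_q: p\preceq q\text{ in }\mathbf I\}$ be a semilattice directed system of metamorphisms of algebras of type $\tau$ (with $\mathbf I$ having a least element if $\tau$ has constants) and let $\mathbf A$ be its Płonka sum. For each $n$-ary symbol $\sigma$ and $0\le i\le n$ define $a\odot^\sigma_i b:=\xi^{\sigma i}_{ps}(a)$ for $a\in A_p$, $b\in A_q$, $s:=p\vee q$. Then $\sigma\mapsto\langle\odot^\sigma_0,\dots,\odot^\sigma_n\rangle$ is a partition system for $\mathbf A$; the classes of the common equivalence $\equiv_\odot$ are exactly the sets $A_p$, with $a\preceq_\odot b$ iff $p\preceq q$ for $a\in A_p,b\in A_q$; and the directed system induced by this partition system (via $\xi'^{\sigma i}_{pq}(a)=a\odot^\sigma_i b$ for any $b\in A_q$) coincides with the given one, i.e. $a\odot^\sigma_i b=\xi^{\sigma i}_{pq}(a)$ for $p\preceq q$, $a\in A_p$, $b\in A_q$.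
   Context: A left normal band on a set $A$ is a binary operation $\odot$ with $a\odot a=a$, $a\odot(b\odot c)=(a\odot b)\odot c$, $a\odot(b\odot c)=a\odot(c\odot b)$. Put $a\preceq_\odot b\iff b\odot a=b$, and $a\equiv_\odot b$ iff $a\preceq_\odot b$ and $b\preceq_\odot a$. Left normal bands $\odot,\otimes$ are homotactic if $\preceq_\odot=\preceq_\otimes$. For an algebra $\mathbf A$ of type $\tau$, a partition system assigns to each $n$-ary symbol $\sigma$ (constants: $n=0$) a tuple $\langle\odot^\sigma_0,\dots,\odot^\sigma_n\rangle$ of pairwise homotactic left normal bands (homotactic across all $\sigma$) such that for all $a_i,b$: if $n\ge1$, $\sigma^{\mathbf A}(a_1,\dots,a_n)\odot^\sigma_0b=\sigma^{\mathbf A}(a_1\odot^\sigma_1b,\dots,a_n\odot^\sigma_nb)$; and $b\odot^\sigma_0\sigma^{\mathbf A}(a_1,\dots,a_n)=b\odot^\sigma_0a_1\odot^\sigma_0\cdots\odot^\sigma_0a_n$ (for constants $\omega$: $b\odot^\omega_0\omega^{\mathbf A}=b$). A metamorphism $f:\mathbf A\Rightarrow\mathbf B$ assigns to each $n$-ary $\sigma$ maps $f^{\sigma0},\dots,f^{\sigma n}:A\to B$ with $f^{\sigma0}(\sigma^{\mathbf A}(a_1,\dots,a_n))=\sigma^{\mathbf B}(f^{\sigma1}(a_1),\dots,f^{\sigma n}(a_n))$; composition is componentwise. A semilattice directed system of metamorphisms over a join-semilattice $\mathbf I=\langle I,\vee\rangle$ (order $\preceq$) is a family of pairwise disjoint algebras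 $\mathbf A_p$ with metamorphisms $\xi_{pq}:\mathbf A_p\Rightarrow\mathbf A_q$ ($p\preceq q$), $\xi_{pp}$ identity, $\xi_{qr}\circ\xi_{pq}=\xi_{pr}$. Its Płonka sum is the algebra on $\biguplus_pA_p$ with $\sigma(a_1,\dots,a_n):=\sigma^{\mathbf A_q}(\xi^{\sigma1}_{p_1q}(a_1),\dots,\xi^{\sigma n}_{p_nq}(a_n))$ for $a_i\in A_{p_i}$, $q=p_1\vee\dots\vee p_n$, and $\omega:=\omega^{\mathbf A_\bot}$ for constants, $\bot$ the least element of $\mathbf I$. *)

theory Defs
  imports Main
begin

text \<open>A type \<tau> is given by an arity function ar :: 's => nat on the symbols 's.\<close>

definition is_algebra :: "('s \<Rightarrow> nat) \<Rightarrow> 'a set \<Rightarrow> ('s \<Rightarrow> 'a list \<Rightarrow> 'a) \<Rightarrow> bool" where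
  "is_algebra ar S f \<longleftrightarrow> S \<noteq> {} \<and>
     (\<forall>\<sigma> xs. length xs = ar \<sigma> \<and> set xs \<subseteq> S \<longrightarrow> f \<sigma> xs \<in> S)"

definition metamorphism :: "('s \<Rightarrow> nat) \<Rightarrow> 'a set \<Rightarrow> ('s \<Rightarrow> 'a list \<Rightarrow> 'a)
    \<Rightarrow> 'a set \<Rightarrow> ('s \<Rightarrow> 'a list \<Rightarrow> 'a) \<Rightarrow> ('s \<Rightarrow> nat \<Rightarrow> 'a \<Rightarrow> 'a) \<Rightarrow> bool" where
  "metamorphism ar SA fA SB fB h \<longleftrightarrow>
     (\<forall>\<sigma> i. i \<le> ar \<sigma> \<longrightarrow> h \<sigma> i ` SA \<subseteq> SB) \<and>
     (\<forall>\<sigma> xs. length xs = ar \<sigma> \<and> set xs \<subseteq> SA \<longrightarrow>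
        h \<sigma> 0 (fA \<sigma> xs) = fB \<sigma> (map (\<lambda>i. h \<sigma> (Suc i) (xs ! i)) [0..<ar \<sigma>]))"

definition sl_directed_system :: "('s \<Rightarrow> nat) \<Rightarrow> ('i::semilattice_sup \<Rightarrow> 'a set)
    \<Rightarrow> ('i \<Rightarrow> 's \<Rightarrow> 'a list \<Rightarrow> 'a) \<Rightarrow> ('i \<Rightarrow> 'i \<Rightarrow> 's \<Rightarrow> nat \<Rightarrow> 'a \<Rightarrow> 'a) \<Rightarrow> bool" where
  "sl_directed_system ar A opA xi \<longleftrightarrow>
     (\<forall>p. is_algebra ar (A p) (opA p)) \<and>
     (\<forall>p q. p \<noteq> q \<longrightarrow> A p \<inter> A q = {}) \<and>
     (\<forall>p q. p \<le> q \<longrightarrow> metamorphism ar (A p) (opA p) (A q) (opA q) (xi p q)) \<and>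
     (\<forall>p \<sigma> i a. i \<le> ar \<sigma> \<and> a \<in> A p \<longrightarrow> xi p p \<sigma> i a = a) \<and>
     (\<forall>p q r \<sigma> i a. p \<le> q \<and> q \<le> r \<and> i \<le> ar \<sigma> \<and> a \<in> A p \<longrightarrow>
        xi q r \<sigma> i (xi p q \<sigma> i a) = xi p r \<sigma> i a)"

definition idx :: "('i \<Rightarrow> 'a set) \<Rightarrow> 'a \<Rightarrow> 'i" where
  "idx A a = (THE p. a \<in> A p)"

fun joinl :: "'i::semilattice_sup list \<Rightarrow> 'i" where
  "joinl [] = undefined"
| "joinl [p] = p"
| "joinl (p # q # ps) = sup p (joinl (q # ps))"

definition plonka_carrier :: "('i \<Rightarrow> 'a set) \<Rightarrow> 'a set" where
  "plonka_carrier A = \<Union> (range A)"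

definition plonka_op :: "('s \<Rightarrow> nat) \<Rightarrow> ('i::semilattice_sup \<Rightarrow> 'a set)
    \<Rightarrow> ('i \<Rightarrow> 's \<Rightarrow> 'a list \<Rightarrow> 'a) \<Rightarrow> ('i \<Rightarrow> 'i \<Rightarrow> 's \<Rightarrow> nat \<Rightarrow> 'a \<Rightarrow> 'a) \<Rightarrow> 's \<Rightarrow> 'a list \<Rightarrow> 'a" where
  "plonka_op ar A opA xi \<sigma> xs =
     (if ar \<sigma> = 0 then opA (LEAST p. True) \<sigma> []
      else (let q = joinl (map (idx A) xs)
            in opA q \<sigma> (map (\<lambda>i. xi (idx A (xs ! i)) q \<sigma> (Suc i) (xs ! i)) [0..<ar \<sigma>])))"

definition left_normal_band :: "'a set \<Rightarrow> ('a \<Rightarrow> 'a \<Rightarrow> 'a) \<Rightarrow> bool" where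
  "left_normal_band S f \<longleftrightarrow>
     (\<forall>a\<in>S. \<forall>b\<in>S. f a b \<in> S) \<and>
     (\<forall>a\<in>S. f a a = a) \<and>
     (\<forall>a\<in>S. \<forall>b\<in>S. \<forall>c\<in>S. f a (f b c) = f (f a b) c) \<and>
     (\<forall>a\<in>S. \<forall>b\<in>S. \<forall>c\<in>S. f a (f b c) = f a (f c b))"

definition band_le :: "('a \<Rightarrow> 'a \<Rightarrow> 'a) \<Rightarrow> 'a \<Rightarrow> 'a \<Rightarrow> bool" where
  "band_le f a b \<longleftrightarrow> f b a = b"

definition band_eqv :: "('a \<Rightarrow> 'a \<Rightarrow> 'a) \<Rightarrow> 'a \<Rightarrow> 'a \<Rightarrow> bool" where
  "band_eqv f a b \<longleftrightarrow> band_le f a b \<and> band_le f b a"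

definition homotactic :: "'a set \<Rightarrow> ('a \<Rightarrow> 'a \<Rightarrow> 'a) \<Rightarrow> ('a \<Rightarrow> 'a \<Rightarrow> 'a) \<Rightarrow> bool" where
  "homotactic S f g \<longleftrightarrow> (\<forall>a\<in>S. \<forall>b\<in>S. band_le f a b \<longleftrightarrow> band_le g a b)"

text \<open>Partition system for the algebra (S, f): B \<sigma> i is the band \<odot>^\<sigma>_i, 0 <= i <= ar \<sigma>.
  The second compatibility condition b \<odot>0 \<sigma>(a1..an) = b \<odot>0 a1 \<odot>0 ... \<odot>0 an is written
  with foldl (for constants it reduces to b \<odot>0 \<omega> = b).\<close>
definition partition_system :: "('s \<Rightarrow> nat) \<Rightarrow> 'a set \<Rightarrow> ('s \<Rightarrow> 'a list \<Rightarrow> 'a)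
    \<Rightarrow> ('s \<Rightarrow> nat \<Rightarrow> 'a \<Rightarrow> 'a \<Rightarrow> 'a) \<Rightarrow> bool" where
  "partition_system ar S f B \<longleftrightarrow>
     (\<forall>\<sigma> i. i \<le> ar \<sigma> \<longrightarrow> left_normal_band S (B \<sigma> i)) \<and>
     (\<forall>\<sigma> i \<sigma>' j. i \<le> ar \<sigma> \<and> j \<le> ar \<sigma>' \<longrightarrow> homotactic S (B \<sigma> i) (B \<sigma>' j)) \<and>
     (\<forall>\<sigma> xs b. 1 \<le> ar \<sigma> \<and> length xs = ar \<sigma> \<and> set xs \<subseteq> S \<and> b \<in> S \<longrightarrow>
        B \<sigma> 0 (f \<sigma> xs) b = f \<sigma> (map (\<lambda>i. B \<sigma> (Suc i) (xs ! i) b) [0..<ar \<sigma>])) \<and>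
     (\<forall>\<sigma> xs b. length xs = ar \<sigma> \<and> set xs \<subseteq> S \<and> b \<in> S \<longrightarrow>
        B \<sigma> 0 b (f \<sigma> xs) = foldl (B \<sigma> 0) b xs)"

definition plonka_band :: "('i::semilattice_sup \<Rightarrow> 'a set) \<Rightarrow> ('i \<Rightarrow> 'i \<Rightarrow> 's \<Rightarrow> nat \<Rightarrow> 'a \<Rightarrow> 'a)
    \<Rightarrow> 's \<Rightarrow> nat \<Rightarrow> 'a \<Rightarrow> 'a \<Rightarrow> 'a" where
  "plonka_band A xi \<sigma> i a b = xi (idx A a) (sup (idx A a) (idx A b)) \<sigma> i a"

end

theory Submission
  imports Defs
begin

text \<open>Every operation of the Plonka sum, and every band product a \<odot> b, is computed in the
  summand indexed by the join of the indices of its arguments, after transporting them there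
  along the system. Hence all identities reduce to the functoriality xi q r \<circ> xi p q = xi p r
  and to the semilattice laws of the indices. The band order is the index order because
  b \<odot> a = xi q (q \<squnion> p) b lies in A (q \<squnion> p), so by disjointness of the summands it can only
  equal b if q \<squnion> p = q.\<close>

lemma joinl_upper: "p \<in> set ps \<Longrightarrow> p \<le> joinl ps"
  by (induction ps rule: joinl.induct) (auto intro: le_supI2)

lemma joinl_map_sup: "ps \<noteq> [] \<Longrightarrow> joinl (map (\<lambda>p. sup p r) ps) = sup (joinl ps) r"
  by (induction ps rule: joinl.induct) (simp_all add: sup_aci)

lemma foldl_sup_upper: "(r::'i::semilattice_sup) \<le> foldl sup r ps"
  by (induction ps arbitrary: r) (auto intro: order_trans[OF sup_ge1])

lemma foldl_sup_eq_joinl: "ps \<noteq> [] \<Longrightarrow> foldl sup (r::'i::semilattice_sup) ps = sup r (joinl ps)"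
proof (induction ps arbitrary: r rule: joinl.induct)
  case (3 p q ps)
  have "foldl sup r (p # q # ps) = sup (sup r p) (joinl (q # ps))"
    using "3.IH"[of "sup r p"] by simp
  then show ?case by (simp add: sup_assoc)
qed simp_all

lemma Least_True_eq_bot:
  fixes b :: "'i::order"
  assumes "\<forall>p. b \<le> p"
  shows "(LEAST p. True) = b"
  by (rule Least_equality) (use assms in \<open>auto intro: order.antisym\<close>)

locale directed_system =
  fixes ar :: "'s \<Rightarrow> nat"
    and A :: "'i::semilattice_sup \<Rightarrow> 'a set"
    and opA :: "'i \<Rightarrow> 's \<Rightarrow> 'a list \<Rightarrow> 'a"
    and xi :: "'i \<Rightarrow> 'i \<Rightarrow> 's \<Rightarrow> nat \<Rightarrow> 'a \<Rightarrow> 'a"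
  assumes sys: "sl_directed_system ar A opA xi"
begin

abbreviation S where "S \<equiv> plonka_carrier A"
abbreviation f where "f \<equiv> plonka_op ar A opA xi"
abbreviation B where "B \<equiv> plonka_band A xi"

lemma A_algebra: "is_algebra ar (A p) (opA p)"
  and A_disjoint: "p \<noteq> q \<Longrightarrow> A p \<inter> A q = {}"
  and xi_metamorphism: "p \<le> q \<Longrightarrow> metamorphism ar (A p) (opA p) (A q) (opA q) (xi p q)"
  and xi_refl: "i \<le> ar \<sigma> \<Longrightarrow> a \<in> A p \<Longrightarrow> xi p p \<sigma> i a = a"
  and xi_trans: "p \<le> q \<Longrightarrow> q \<le> r \<Longrightarrow> i \<le> ar \<sigma> \<Longrightarrow> a \<in> A p \<Longrightarrow>
    xi q r \<sigma> i (xi p q \<sigma> i a) = xi p r \<sigma> i a"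
  using sys unfolding sl_directed_system_def by simp_all

lemma op_in: "length xs = ar \<sigma> \<Longrightarrow> set xs \<subseteq> A p \<Longrightarrow> opA p \<sigma> xs \<in> A p"
  and A_nonempty: "A p \<noteq> {}"
  using A_algebra[of p] unfolding is_algebra_def by blast+

lemma xi_in: "p \<le> q \<Longrightarrow> i \<le> ar \<sigma> \<Longrightarrow> a \<in> A p \<Longrightarrow> xi p q \<sigma> i a \<in> A q"
  and xi_hom: "p \<le> q \<Longrightarrow> length xs = ar \<sigma> \<Longrightarrow> set xs \<subseteq> A p \<Longrightarrow>
    xi p q \<sigma> 0 (opA p \<sigma> xs) = opA q \<sigma> (map (\<lambda>i. xi p q \<sigma> (Suc i) (xs ! i)) [0..<ar \<sigma>])"
  using xi_metamorphism[of p q] unfolding metamorphism_def by blast+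

lemma idx_eq: "a \<in> A p \<Longrightarrow> idx A a = p"
  unfolding idx_def using A_disjoint by (intro the_equality) auto

lemma in_A_idx: "a \<in> S \<Longrightarrow> a \<in> A (idx A a)"
  unfolding plonka_carrier_def using idx_eq by auto

lemma in_carrier: "a \<in> A p \<Longrightarrow> a \<in> S"
  unfolding plonka_carrier_def by blast

lemma band_eq: "a \<in> A p \<Longrightarrow> b \<in> A q \<Longrightarrow> B \<sigma> i a b = xi p (sup p q) \<sigma> i a"
  unfolding plonka_band_def using idx_eq by simp

lemma band_in: "a \<in> A p \<Longrightarrow> b \<in> A q \<Longrightarrow> i \<le> ar \<sigma> \<Longrightarrow> B \<sigma> i a b \<in> A (sup p q)"
  using band_eq xi_in by simp

lemma band_eq_xi: "p \<le> q \<Longrightarrow> a \<in> A p \<Longrightarrow> b \<in> A q \<Longrightarrow> B \<sigma> i a b = xi p q \<sigma> i a"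
  using band_eq by (simp add: sup_absorb2)

lemma band_le_iff:
  assumes a: "a \<in> A p" and b: "b \<in> A q" and i: "i \<le> ar \<sigma>"
  shows "band_le (B \<sigma> i) a b \<longleftrightarrow> p \<le> q"
proof
  assume "band_le (B \<sigma> i) a b"
  then have "xi q (sup q p) \<sigma> i b = b"
    using band_eq[OF b a] unfolding band_le_def by simp
  then have "b \<in> A (sup q p)"
    by (metis xi_in[OF sup_ge1 i b])
  then have "sup q p = q"
    using b A_disjoint by blast
  then show "p \<le> q"
    by (metis sup_ge2)
next
  assume "p \<le> q"
  then show "band_le (B \<sigma> i) a b"
    using band_eq[OF b a] xi_refl[OF i b] unfolding band_le_def by (simp add: sup_absorb1)
qed

lemma band_eqv_iff:
  assumes "a \<in> A p" and "b \<in> A q" and "i \<le> ar \<sigma>"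
  shows "band_eqv (B \<sigma> i) a b \<longleftrightarrow> p = q"
  using band_le_iff[OF assms] band_le_iff[OF assms(2,1,3)] unfolding band_eqv_def by auto

lemma band_eqv_class:
  assumes i: "i \<le> ar \<sigma>" and a: "a \<in> A p"
  shows "{b \<in> S. band_eqv (B \<sigma> i) a b} = A p"
proof (intro set_eqI iffI)
  fix b assume "b \<in> {b \<in> S. band_eqv (B \<sigma> i) a b}"
  then have "b \<in> A (idx A b)" and "p = idx A b"
    using in_A_idx band_eqv_iff[OF a _ i] by auto
  then show "b \<in> A p" by simp
next
  fix b assume "b \<in> A p"
  then show "b \<in> {b \<in> S. band_eqv (B \<sigma> i) a b}"
    using in_carrier band_eqv_iff[OF a _ i] by simp
qed

lemma band_eqv_classes:
  assumes "i \<le> ar \<sigma>"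
  shows "(\<lambda>a. {b \<in> S. band_eqv (B \<sigma> i) a b}) ` S = range A"
proof
  show "(\<lambda>a. {b \<in> S. band_eqv (B \<sigma> i) a b}) ` S \<subseteq> range A"
    using band_eqv_class[OF assms] in_A_idx by blast
  show "range A \<subseteq> (\<lambda>a. {b \<in> S. band_eqv (B \<sigma> i) a b}) ` S"
  proof
    fix X assume "X \<in> range A"
    then obtain p a where "X = A p" "a \<in> A p"
      using A_nonempty by blast
    then show "X \<in> (\<lambda>a. {b \<in> S. band_eqv (B \<sigma> i) a b}) ` S"
      using band_eqv_class[OF assms] in_carrier by blast
  qed
qed

lemma homotactic_bands:
  assumes "i \<le> ar \<sigma>" and "j \<le> ar \<tau>"
  shows "homotactic S (B \<sigma> i) (B \<tau> j)"
  unfolding homotactic_def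
proof (intro ballI)
  fix a b assume "a \<in> S" "b \<in> S"
  then show "band_le (B \<sigma> i) a b \<longleftrightarrow> band_le (B \<tau> j) a b"
    using band_le_iff[OF in_A_idx in_A_idx] assms by simp
qed

lemma band_left_normal:
  assumes i: "i \<le> ar \<sigma>"
  shows "left_normal_band S (B \<sigma> i)"
  unfolding left_normal_band_def
proof (intro conjI ballI)
  fix a b c assume "a \<in> S" "b \<in> S" "c \<in> S"
  then obtain p q r where a: "a \<in> A p" and b: "b \<in> A q" and c: "c \<in> A r"
    using in_A_idx by blast
  show "B \<sigma> i a b \<in> S"
    using band_in[OF a b i] in_carrier by blast
  show "B \<sigma> i a a = a"
    using band_eq[OF a a] xi_refl[OF i a] by simp
  have right: "B \<sigma> i a (B \<sigma> i b c) = xi p (sup p (sup q r)) \<sigma> i a"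
    using band_eq[OF a band_in[OF b c i]] .
  then show "B \<sigma> i a (B \<sigma> i b c) = B \<sigma> i a (B \<sigma> i c b)"
    using band_eq[OF a band_in[OF c b i]] by (simp add: sup_commute)
  have "B \<sigma> i (B \<sigma> i a b) c = xi (sup p q) (sup (sup p q) r) \<sigma> i (xi p (sup p q) \<sigma> i a)"
    using band_eq[OF band_in[OF a b i] c] band_eq[OF a b] by simp
  also have "\<dots> = xi p (sup (sup p q) r) \<sigma> i a"
    using xi_trans[OF sup_ge1 sup_ge1 i a] .
  finally show "B \<sigma> i a (B \<sigma> i b c) = B \<sigma> i (B \<sigma> i a b) c"
    using right by (simp add: sup_assoc)
qed

context
  fixes \<sigma> :: 's and xs :: "'a list"
  assumes nonconst: "ar \<sigma> \<noteq> 0" and len: "length xs = ar \<sigma>" and xs: "set xs \<subseteq> S"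
begin

lemma nth_in_A_idx: "i < ar \<sigma> \<Longrightarrow> xs ! i \<in> A (idx A (xs ! i))"
  using in_A_idx xs len by (simp add: subset_iff)

lemma idx_nth_le_joinl: "i < ar \<sigma> \<Longrightarrow> idx A (xs ! i) \<le> joinl (map (idx A) xs)"
  using len by (metis joinl_upper length_map nth_map nth_mem)

lemma xi_nth_in: "i < ar \<sigma> \<Longrightarrow> idx A (xs ! i) \<le> s \<Longrightarrow> xi (idx A (xs ! i)) s \<sigma> (Suc i) (xs ! i) \<in> A s"
  by (rule xi_in) (simp_all add: nth_in_A_idx)

lemma plonka_op_eq: "f \<sigma> xs = opA (joinl (map (idx A) xs)) \<sigma>
    (map (\<lambda>i. xi (idx A (xs ! i)) (joinl (map (idx A) xs)) \<sigma> (Suc i) (xs ! i)) [0..<ar \<sigma>])"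
  using nonconst unfolding plonka_op_def by (simp add: Let_def)

lemma plonka_op_in: "f \<sigma> xs \<in> A (joinl (map (idx A) xs))"
  unfolding plonka_op_eq
  by (rule op_in) (auto simp: in_set_conv_nth intro: xi_nth_in[OF _ idx_nth_le_joinl])

lemma xi_plonka_op:
  assumes "joinl (map (idx A) xs) \<le> s"
  shows "xi (joinl (map (idx A) xs)) s \<sigma> 0 (f \<sigma> xs)
    = opA s \<sigma> (map (\<lambda>i. xi (idx A (xs ! i)) s \<sigma> (Suc i) (xs ! i)) [0..<ar \<sigma>])"
proof -
  let ?q = "joinl (map (idx A) xs)"
  let ?ys = "map (\<lambda>i. xi (idx A (xs ! i)) ?q \<sigma> (Suc i) (xs ! i)) [0..<ar \<sigma>]"
  have "set ?ys \<subseteq> A ?q"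
    using xi_nth_in[OF _ idx_nth_le_joinl] by auto
  then have "xi ?q s \<sigma> 0 (opA ?q \<sigma> ?ys) = opA s \<sigma> (map (\<lambda>i. xi ?q s \<sigma> (Suc i) (?ys ! i)) [0..<ar \<sigma>])"
    using xi_hom[OF assms] by simp
  also have "\<dots> = opA s \<sigma> (map (\<lambda>i. xi (idx A (xs ! i)) s \<sigma> (Suc i) (xs ! i)) [0..<ar \<sigma>])"
    by (intro arg_cong[where f = "opA s \<sigma>"] map_cong refl)
      (simp add: xi_trans[OF idx_nth_le_joinl assms _ nth_in_A_idx])
  finally show ?thesis
    unfolding plonka_op_eq .
qed

lemma band_plonka_op_left:
  assumes b: "b \<in> A r"
  shows "B \<sigma> 0 (f \<sigma> xs) b = f \<sigma> (map (\<lambda>i. B \<sigma> (Suc i) (xs ! i) b) [0..<ar \<sigma>])"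
proof -
  define q where "q = joinl (map (idx A) xs)"
  define s where "s = sup q r"
  define zs where "zs = map (\<lambda>i. B \<sigma> (Suc i) (xs ! i) b) [0..<ar \<sigma>]"
  have zs_nth: "zs ! i = xi (idx A (xs ! i)) (sup (idx A (xs ! i)) r) \<sigma> (Suc i) (xs ! i)"
    and zs_in: "zs ! i \<in> A (sup (idx A (xs ! i)) r)" if "i < ar \<sigma>" for i
    using band_eq[OF nth_in_A_idx[OF that] b] band_in[OF nth_in_A_idx[OF that] b] that
    by (simp_all add: zs_def)
  have len_zs: "length zs = ar \<sigma>"
    by (simp add: zs_def)
  have "map (idx A) zs = map (\<lambda>p. sup p r) (map (idx A) xs)"
    by (rule nth_equalityI) (simp_all add: len_zs len idx_eq[OF zs_in])
  moreover have "xs \<noteq> []"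
    using nonconst len by auto
  ultimately have joinl_zs: "joinl (map (idx A) zs) = s"
    using joinl_map_sup[of "map (idx A) xs" r]
    by (simp add: q_def s_def del: map_map)
  have "B \<sigma> 0 (f \<sigma> xs) b = xi q s \<sigma> 0 (f \<sigma> xs)"
    using band_eq[OF plonka_op_in b] by (simp add: q_def s_def)
  also have "\<dots> = opA s \<sigma> (map (\<lambda>i. xi (idx A (xs ! i)) s \<sigma> (Suc i) (xs ! i)) [0..<ar \<sigma>])"
    using xi_plonka_op by (simp add: q_def s_def)
  also have "\<dots> = opA s \<sigma> (map (\<lambda>i. xi (idx A (zs ! i)) s \<sigma> (Suc i) (zs ! i)) [0..<ar \<sigma>])"
  proof (intro arg_cong[where f = "opA s \<sigma>"] map_cong refl)
    fix i assume "i \<in> set [0..<ar \<sigma>]"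
    then have i: "i < ar \<sigma>" by simp
    have le_s: "sup (idx A (xs ! i)) r \<le> s"
      using idx_nth_le_joinl[OF i] by (simp add: s_def q_def le_supI1)
    show "xi (idx A (xs ! i)) s \<sigma> (Suc i) (xs ! i) = xi (idx A (zs ! i)) s \<sigma> (Suc i) (zs ! i)"
      unfolding idx_eq[OF zs_in[OF i]] unfolding zs_nth[OF i]
      using xi_trans[OF sup_ge1 le_s Suc_leI[OF i] nth_in_A_idx[OF i]] by simp
  qed
  also have "\<dots> = f \<sigma> zs"
    using nonconst joinl_zs unfolding plonka_op_def by (simp add: Let_def zs_def)
  finally show ?thesis
    by (simp add: zs_def)
qed

end

lemma foldl_band:
  "b \<in> A r \<Longrightarrow> set xs \<subseteq> S \<Longrightarrow> foldl (B \<sigma> 0) b xs = xi r (foldl sup r (map (idx A) xs)) \<sigma> 0 b"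
proof (induction xs arbitrary: b r)
  case Nil
  then show ?case using xi_refl by simp
next
  case (Cons x xs)
  let ?p = "idx A x"
  have bx: "B \<sigma> 0 b x = xi r (sup r ?p) \<sigma> 0 b"
    using band_eq Cons.prems in_A_idx by simp
  have "foldl (B \<sigma> 0) b (x # xs) = xi (sup r ?p) (foldl sup (sup r ?p) (map (idx A) xs)) \<sigma> 0
      (xi r (sup r ?p) \<sigma> 0 b)"
    using Cons.IH[OF xi_in[OF sup_ge1 _ Cons.prems(1)]] Cons.prems bx by simp
  also have "\<dots> = xi r (foldl sup (sup r ?p) (map (idx A) xs)) \<sigma> 0 b"
    using xi_trans[OF sup_ge1 foldl_sup_upper _ Cons.prems(1)] by simp
  finally show ?case by simp
qed

lemma band_plonka_op_right:
  assumes bot: "(\<exists>\<sigma>. ar \<sigma> = 0) \<longrightarrow> (\<exists>b::'i. \<forall>p. b \<le> p)"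
    and len: "length xs = ar \<sigma>" and xs: "set xs \<subseteq> S" and b: "b \<in> A r"
  shows "B \<sigma> 0 b (f \<sigma> xs) = foldl (B \<sigma> 0) b xs"
proof (cases "ar \<sigma> = 0")
  case True
  then obtain p0 :: 'i where p0: "\<forall>p. p0 \<le> p"
    using bot by blast
  have "f \<sigma> xs = opA p0 \<sigma> []"
    using True unfolding plonka_op_def Least_True_eq_bot[OF p0] by simp
  moreover have "opA p0 \<sigma> [] \<in> A p0"
    using op_in True by simp
  ultimately have "B \<sigma> 0 b (f \<sigma> xs) = xi r (sup r p0) \<sigma> 0 b"
    using band_eq[OF b] by simp
  also have "\<dots> = b"
    using p0 xi_refl[OF _ b] by (simp add: sup_absorb1)
  finally show ?thesis
    using True len by simp
next
  case False
  then have "map (idx A) xs \<noteq> []"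
    using len by auto
  then have "foldl (B \<sigma> 0) b xs = xi r (sup r (joinl (map (idx A) xs))) \<sigma> 0 b"
    using foldl_band[OF b xs] foldl_sup_eq_joinl[of "map (idx A) xs" r] by simp
  then show ?thesis
    using band_eq[OF b plonka_op_in[OF False len xs]] by simp
qed

lemma plonka_partition_system:
  assumes "(\<exists>\<sigma>. ar \<sigma> = 0) \<longrightarrow> (\<exists>b::'i. \<forall>p. b \<le> p)"
  shows "partition_system ar S f B"
  unfolding partition_system_def
proof (intro conjI allI impI)
  fix \<sigma> i assume "i \<le> ar \<sigma>"
  then show "left_normal_band S (B \<sigma> i)"
    by (rule band_left_normal)
next
  fix \<sigma> i \<tau> j assume "i \<le> ar \<sigma> \<and> j \<le> ar \<tau>"
  then show "homotactic S (B \<sigma> i) (B \<tau> j)"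
    by (simp add: homotactic_bands)
next
  fix \<sigma> xs b assume "1 \<le> ar \<sigma> \<and> length xs = ar \<sigma> \<and> set xs \<subseteq> S \<and> b \<in> S"
  then show "B \<sigma> 0 (f \<sigma> xs) b = f \<sigma> (map (\<lambda>i. B \<sigma> (Suc i) (xs ! i) b) [0..<ar \<sigma>])"
    using band_plonka_op_left[OF _ _ _ in_A_idx] by simp
next
  fix \<sigma> xs b assume "length xs = ar \<sigma> \<and> set xs \<subseteq> S \<and> b \<in> S"
  then show "B \<sigma> 0 b (f \<sigma> xs) = foldl (B \<sigma> 0) b xs"
    using band_plonka_op_right[OF assms _ _ in_A_idx] by simp
qed

end

theorem theorem4p6:
  fixes ar :: "'s \<Rightarrow> nat"
    and A :: "'i::semilattice_sup \<Rightarrow> 'a set"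
    and opA :: "'i \<Rightarrow> 's \<Rightarrow> 'a list \<Rightarrow> 'a"
    and xi :: "'i \<Rightarrow> 'i \<Rightarrow> 's \<Rightarrow> nat \<Rightarrow> 'a \<Rightarrow> 'a"
  assumes sys: "sl_directed_system ar A opA xi"
    and bot: "(\<exists>\<sigma>. ar \<sigma> = 0) \<longrightarrow> (\<exists>b::'i. \<forall>p. b \<le> p)"
  shows "partition_system ar (plonka_carrier A) (plonka_op ar A opA xi) (plonka_band A xi)
    \<and> (\<forall>\<sigma> i. i \<le> ar \<sigma> \<longrightarrow>
         (\<lambda>a. {b \<in> plonka_carrier A. band_eqv (plonka_band A xi \<sigma> i) a b}) ` plonka_carrier A
           = range A)
    \<and> (\<forall>\<sigma> i p q a b. i \<le> ar \<sigma> \<and> a \<in> A p \<and> b \<in> A q \<longrightarrow>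
         (band_le (plonka_band A xi \<sigma> i) a b \<longleftrightarrow> p \<le> q))
    \<and> (\<forall>\<sigma> i p q a b. i \<le> ar \<sigma> \<and> p \<le> q \<and> a \<in> A p \<and> b \<in> A q \<longrightarrow>
         plonka_band A xi \<sigma> i a b = xi p q \<sigma> i a)"
proof -
  interpret directed_system ar A opA xi
    using sys by unfold_locales
  show ?thesis
    using plonka_partition_system[OF bot] band_eqv_classes band_le_iff band_eq_xi by simp
qed

end
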